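(* Let $N>0$, $R=\mathbb{Q}[x_1,x_2,y_1,y_2]$, and let $X_\circ$, $X_\bullet$, $\pi_\circ,\pi_\bullet$ and $a_2$ be as in the context. Define the $R$-linear map $\chi_0:X_\circ\to X_\bullet\{-2\}$ by $\chi_0(1)=\frac12(x_1+y_1-x_2-y_2)\cdot1+a_2\,\theta_1\theta_2$, $\chi_0(\theta_1)=-\theta_2+\frac12(x_1+y_1)\theta_1$, $\chi_0(\theta_2)=\theta_2-\frac12(x_2+y_2)\theta_1$, $\chi_0(\theta_1\theta_2)=\theta_1\theta_2$. Then $\chi_0$ is a morphism of graded matrix factorisations and $\pi_\bullet\circ\chi_0=m\circ\pi_\circ$, where $m:R/(y_1-x_1,y_2-x_2)\to R/(y_1+y_2-x_1-x_2,\,y_1y_2-x_1x_2)\{-2\}$ is multiplication by $\frac12(x_1+y_1-x_2-y_2)$.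
   Context: Variables have degree $2$; $M\{m\}$ denotes $M$ with grading shifted up by $m$ ($M\{m\}_i=M_{i-m}$). $t_i=y_i-x_i$, $w_i=(y_i^{N+1}-x_i^{N+1})/(y_i-x_i)$, $s_1=y_1+y_2-x_1-x_2$, $s_2=y_1y_2-x_1x_2$; $u_1,u_2$ homogeneous with $y_1^{N+1}+y_2^{N+1}-x_1^{N+1}-x_2^{N+1}=u_1s_1+u_2s_2$ and invariant under interchanging $(x_1,x_2)$ with $(y_1,y_2)$; $a_2=\frac12u_2+(u_1+y_1u_2-w_2)/(x_1-y_1)$ (a polynomial). For homogeneous sequences $\boldsymbol a,\boldsymbol b$ with $\deg a_i+\deg b_i=2c$ ($c=N+1$), $\{\boldsymbol a,\boldsymbol b\}$ is the exterior algebra over $R$ on $\theta_1,\theta_2$ ($\mathbb{Z}_2$-degree $1$, internal degree $\deg a_i-c$) with differential $(\sum b_i\theta_i^* )\lrcorner(-)+(\sum a_i\theta_i)\wedge(-)$. $X_\circ=\{(w_1,w_2),(t_1,t_2)\}$, $X_\bullet=\{(u_1,u_2),(s_1,s_2)\}$. $\pi_\circ:X_\circ\to R/(t_1,t_2)$ and $\pi_\bullet:X_\bullet\to R/(s_1,s_2)$ are the projections onto the exterior degree $0$ part $R$ followed by the quotient map. *)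

theory Defs
  imports "HOL-Computational_Algebra.Polynomial"
begin

text \<open>The ring R = Q[x1,x2,y1,y2], realised as iterated univariate polynomials.
  Outermost variable y2, then y1, then x2, innermost x1.\<close>

type_synonym R = "rat poly poly poly poly"

definition vy2 :: R where "vy2 = [:0, 1:]"
definition vy1 :: R where "vy1 = [:[:0, 1:]:]"
definition vx2 :: R where "vx2 = [:[:[:0, 1:]:]:]"
definition vx1 :: R where "vx1 = [:[:[:[:0, 1:]:]:]:]"

definition ratc :: "rat \<Rightarrow> R" where "ratc q = [:[:[:[:q:]:]:]:]"

definition mcoeff :: "R \<Rightarrow> nat \<Rightarrow> nat \<Rightarrow> nat \<Rightarrow> nat \<Rightarrow> rat" where
  "mcoeff f i j k l = coeff (coeff (coeff (coeff f i) j) k) l"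

definition hom :: "int \<Rightarrow> R \<Rightarrow> bool" where
  "hom n f \<longleftrightarrow> (\<forall>i j k l. mcoeff f i j k l \<noteq> 0 \<longrightarrow> 2 * int (i + j + k + l) = n)"

text \<open>Substitution y2:=A, y1:=B, x2:=C, x1:=D.\<close>
definition subst4 :: "R \<Rightarrow> R \<Rightarrow> R \<Rightarrow> R \<Rightarrow> R \<Rightarrow> R" where
  "subst4 f A B C D =
     poly (map_poly (\<lambda>g. poly (map_poly (\<lambda>h. poly (map_poly (\<lambda>k.
        poly (map_poly ratc k) D) h) C) g) B) f) A"

definition swapxy :: "R \<Rightarrow> R" where
  "swapxy f = subst4 f vx2 vx1 vy2 vy1"

text \<open>Elements of the exterior algebra over R on theta1, theta2, as coordinate
  tuples with respect to the basis (1, theta1, theta2, theta1 theta2).\<close>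
type_synonym ext = "R \<times> R \<times> R \<times> R"

definition ext_add :: "ext \<Rightarrow> ext \<Rightarrow> ext" where
  "ext_add e f = (case e of (e0, e1, e2, e3) \<Rightarrow> case f of (f0, f1, f2, f3) \<Rightarrow>
     (e0 + f0, e1 + f1, e2 + f2, e3 + f3))"

definition ext_smult :: "R \<Rightarrow> ext \<Rightarrow> ext" where
  "ext_smult r e = (case e of (e0, e1, e2, e3) \<Rightarrow> (r * e0, r * e1, r * e2, r * e3))"

definition one_e :: ext where "one_e = (1, 0, 0, 0)"
definition th1 :: ext where "th1 = (0, 1, 0, 0)"
definition th2 :: ext where "th2 = (0, 0, 1, 0)"
definition th12 :: ext where "th12 = (0, 0, 0, 1)"

text \<open>Left multiplication (wedge) by theta1, theta2 and contraction by theta1^*, theta2^*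
  (odd derivations, theta_i^* theta_j = delta_ij).\<close>
definition wedge1 :: "ext \<Rightarrow> ext" where
  "wedge1 e = (case e of (e0, e1, e2, e3) \<Rightarrow> (0, e0, 0, e2))"
definition wedge2 :: "ext \<Rightarrow> ext" where
  "wedge2 e = (case e of (e0, e1, e2, e3) \<Rightarrow> (0, 0, e0, - e1))"
definition contr1 :: "ext \<Rightarrow> ext" where
  "contr1 e = (case e of (e0, e1, e2, e3) \<Rightarrow> (e1, 0, e3, 0))"
definition contr2 :: "ext \<Rightarrow> ext" where
  "contr2 e = (case e of (e0, e1, e2, e3) \<Rightarrow> (e2, - e3, 0, 0))"

text \<open>Differential of the Koszul matrix factorisation {(a1,a2),(b1,b2)}:
  (b1 theta1^* + b2 theta2^*) contracted into e, plus (a1 theta1 + a2 theta2) wedge e.\<close>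
definition kd :: "R \<times> R \<Rightarrow> R \<times> R \<Rightarrow> ext \<Rightarrow> ext" where
  "kd a b e = ext_add
     (ext_add (ext_smult (fst b) (contr1 e)) (ext_smult (snd b) (contr2 e)))
     (ext_add (ext_smult (fst a) (wedge1 e)) (ext_smult (snd a) (wedge2 e)))"

definition ext_hom :: "int \<Rightarrow> int \<Rightarrow> int \<Rightarrow> ext \<Rightarrow> bool" where
  "ext_hom d1 d2 n e = (case e of (e0, e1, e2, e3) \<Rightarrow>
     hom n e0 \<and> hom (n - d1) e1 \<and> hom (n - d2) e2 \<and> hom (n - d1 - d2) e3)"

definition ext_even :: "ext \<Rightarrow> bool" where
  "ext_even e = (case e of (e0, e1, e2, e3) \<Rightarrow> e1 = 0 \<and> e2 = 0)"
definition ext_odd :: "ext \<Rightarrow> bool" where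
  "ext_odd e = (case e of (e0, e1, e2, e3) \<Rightarrow> e0 = 0 \<and> e3 = 0)"

definition ext0 :: "ext \<Rightarrow> R" where "ext0 e = fst e"

definition in_ideal2 :: "R \<Rightarrow> R \<Rightarrow> R \<Rightarrow> bool" where
  "in_ideal2 f g h \<longleftrightarrow> (\<exists>p q. f = p * g + q * h)"

definition tt1 :: R where "tt1 = vy1 - vx1"
definition tt2 :: R where "tt2 = vy2 - vx2"
definition ww1 :: "nat \<Rightarrow> R" where "ww1 N = (vy1 ^ (N + 1) - vx1 ^ (N + 1)) div (vy1 - vx1)"
definition ww2 :: "nat \<Rightarrow> R" where "ww2 N = (vy2 ^ (N + 1) - vx2 ^ (N + 1)) div (vy2 - vx2)"
definition ss1 :: R where "ss1 = vy1 + vy2 - vx1 - vx2"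
definition ss2 :: R where "ss2 = vy1 * vy2 - vx1 * vx2"

definition aa2 :: "nat \<Rightarrow> R \<Rightarrow> R \<Rightarrow> R" where
  "aa2 N u1 u2 = ratc (1/2) * u2 + (u1 + vy1 * u2 - ww2 N) div (vx1 - vy1)"

definition chi0 :: "nat \<Rightarrow> R \<Rightarrow> R \<Rightarrow> ext \<Rightarrow> ext" where
  "chi0 N u1 u2 e = (case e of (e0, e1, e2, e3) \<Rightarrow>
     ext_add
      (ext_add (ext_smult e0 (ext_add (ext_smult (ratc (1/2) * (vx1 + vy1 - vx2 - vy2)) one_e)
                                      (ext_smult (aa2 N u1 u2) th12)))
               (ext_smult e1 (ext_add (ext_smult (-1) th2) (ext_smult (ratc (1/2) * (vx1 + vy1)) th1))))
      (ext_add (ext_smult e2 (ext_add th2 (ext_smult (- (ratc (1/2) * (vx2 + vy2))) th1)))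
               (ext_smult e3 th12)))"

end

theory Submission
  imports Defs "HOL-Computational_Algebra.Polynomial_Factorial" "HOL-Computational_Algebra.Field_as_Ring"
begin

text \<open>The only non-formal ingredient is that \<open>a\<^sub>2\<close> is a polynomial satisfying
  \<open>a\<^sub>2 t\<^sub>1 = w\<^sub>2 - u\<^sub>1 - u\<^sub>2 (x\<^sub>1 + y\<^sub>1)/2\<close> and \<open>a\<^sub>2 t\<^sub>2 = u\<^sub>1 + u\<^sub>2 (x\<^sub>2 + y\<^sub>2)/2 - w\<^sub>1\<close>.
  Since \<open>w\<^sub>1 t\<^sub>1 + w\<^sub>2 t\<^sub>2 = u\<^sub>1 s\<^sub>1 + u\<^sub>2 s\<^sub>2\<close>, one gets
  \<open>t\<^sub>2 (u\<^sub>1 + y\<^sub>1 u\<^sub>2 - w\<^sub>2) = t\<^sub>1 (w\<^sub>1 - u\<^sub>1 - x\<^sub>2 u\<^sub>2)\<close>, so \<open>t\<^sub>1\<close> divides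
  \<open>u\<^sub>1 + y\<^sub>1 u\<^sub>2 - w\<^sub>2\<close> because \<open>t\<^sub>1\<close> and \<open>t\<^sub>2\<close> are coprime; this yields the first relation, and the
  second follows from the first after multiplying by \<open>t\<^sub>1\<close>. Given these relations, commuting with
  the differentials amounts to four polynomial identities valid in any commutative ring
  containing \<open>1/2\<close>. Homogeneity of \<open>a\<^sub>2\<close> holds because an exact quotient of homogeneous
  polynomials is homogeneous.\<close>

locale homogeneity =
  fixes H :: "int \<Rightarrow> 'a::idom \<Rightarrow> bool"
  assumes zero [simp]: "H n 0"
    and one: "H 0 1"
    and add: "H n a \<Longrightarrow> H n b \<Longrightarrow> H n (a + b)"
    and uminus: "H n a \<Longrightarrow> H n (- a)"
    and mult: "H m a \<Longrightarrow> H k b \<Longrightarrow> H (m + k) (a * b)"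
    and cancel: "H k a \<Longrightarrow> a \<noteq> 0 \<Longrightarrow> H m (a * b) \<Longrightarrow> H (m - k) b"
begin

lemma diff: "H n a \<Longrightarrow> H n b \<Longrightarrow> H n (a - b)"
  using add[of n a "- b"] uminus[of n b] by simp

lemma mult_eq: "H m a \<Longrightarrow> H k b \<Longrightarrow> n = m + k \<Longrightarrow> H n (a * b)"
  using mult by blast

lemma cancel_eq: "H k a \<Longrightarrow> a \<noteq> 0 \<Longrightarrow> H m (a * b) \<Longrightarrow> n = m - k \<Longrightarrow> H n b"
  using cancel by blast

lemma power: "H m a \<Longrightarrow> H (int n * m) (a ^ n)"
  by (induction n) (auto intro: one mult_eq simp: algebra_simps)

lemma sum: "(\<And>i. i \<in> A \<Longrightarrow> H n (f i)) \<Longrightarrow> H n (sum f A)"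
  by (induction A rule: infinite_finite_induct) (auto intro: add)

end

definition const_hom :: "int \<Rightarrow> 'a::zero \<Rightarrow> bool" where
  "const_hom n c \<longleftrightarrow> (c \<noteq> 0 \<longrightarrow> n = 0)"

definition poly_hom :: "(int \<Rightarrow> 'a::zero \<Rightarrow> bool) \<Rightarrow> int \<Rightarrow> 'a poly \<Rightarrow> bool" where
  "poly_hom H n p \<longleftrightarrow> (\<forall>i. H (n - 2 * int i) (coeff p i))"

lemma homogeneity_const_hom: "homogeneity const_hom"
  by unfold_locales (auto simp: const_hom_def)

context homogeneity
begin

lemma poly_hom_mult:
  assumes p: "poly_hom H m p" and q: "poly_hom H k q"
  shows "poly_hom H (m + k) (p * q)"
  unfolding poly_hom_def coeff_mult
proof (intro allI sum)
  fix n :: nat and i assume "i \<in> {..n}"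
  then show "H (m + k - 2 * int n) (coeff p i * coeff q (n - i))"
    using p q unfolding poly_hom_def by (intro mult_eq) (auto simp: of_nat_diff)
qed

text \<open>Strong induction on \<open>j\<close>: the coefficient of \<open>p q\<close> in degree \<open>i\<^sub>0 + j\<close>, where \<open>i\<^sub>0\<close> is the
  lowest degree of \<open>p\<close>, is \<open>coeff p i\<^sub>0 * coeff q j\<close> plus terms involving only lower
  coefficients of \<open>q\<close>.\<close>
lemma poly_hom_cancel:
  assumes p: "poly_hom H k p" and "p \<noteq> 0" and pq: "poly_hom H m (p * q)"
  shows "poly_hom H (m - k) q"
proof -
  have ex: "\<exists>i. coeff p i \<noteq> 0" using \<open>p \<noteq> 0\<close> leading_coeff_neq_0 by blast
  define i0 where "i0 = (LEAST i. coeff p i \<noteq> 0)"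
  have ci0: "coeff p i0 \<noteq> 0" using LeastI_ex[OF ex] unfolding i0_def .
  have below: "coeff p i = 0" if "i < i0" for i using not_less_Least[OF that[unfolded i0_def]] by simp
  have "H (m - k - 2 * int j) (coeff q j)" for j
  proof (induction j rule: less_induct)
    case (less j)
    define n where "n = i0 + j"
    define rest where "rest = (\<Sum>i\<in>{..n} - {i0}. coeff p i * coeff q (n - i))"
    have split: "coeff (p * q) n = coeff p i0 * coeff q j + rest"
      unfolding coeff_mult rest_def n_def by (subst sum.remove[of _ i0]) auto
    have rest: "H (m - 2 * int n) rest"
      unfolding rest_def
    proof (rule sum)
      fix i assume i: "i \<in> {..n} - {i0}"
      show "H (m - 2 * int n) (coeff p i * coeff q (n - i))"
      proof (cases "i < i0")
        case False
        with i have "n - i < j" by (auto simp: n_def)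
        with p show ?thesis
          unfolding poly_hom_def using i False
          by (intro mult_eq[OF _ less.IH]) (auto simp: n_def of_nat_diff)
      qed (simp add: below)
    qed
    have prod: "H (m - 2 * int n) (coeff p i0 * coeff q j)"
      using diff[OF pq[unfolded poly_hom_def, rule_format, of n] rest] split by simp
    have "H (k - 2 * int i0) (coeff p i0)"
      using p unfolding poly_hom_def by blast
    from cancel_eq[OF this ci0 prod] show ?case by (simp add: n_def algebra_simps)
  qed
  then show ?thesis unfolding poly_hom_def by blast
qed

lemma homogeneity_poly_hom: "homogeneity (poly_hom H)"
proof
  show "poly_hom H 0 1" unfolding poly_hom_def coeff_1 using one by simp
next
  fix m k and p q :: "'a poly"
  show "poly_hom H m p \<Longrightarrow> poly_hom H k q \<Longrightarrow> poly_hom H (m + k) (p * q)"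
    by (rule poly_hom_mult)
  show "poly_hom H k p \<Longrightarrow> p \<noteq> 0 \<Longrightarrow> poly_hom H m (p * q) \<Longrightarrow> poly_hom H (m - k) q"
    by (rule poly_hom_cancel)
qed (auto simp: poly_hom_def intro: add uminus)

end

lemma hom_eq_poly_hom: "hom = poly_hom (poly_hom (poly_hom (poly_hom const_hom)))"
proof (intro ext)
  fix n and f :: R
  have "hom n f \<longleftrightarrow> (\<forall>i j k l. mcoeff f i j k l \<noteq> 0 \<longrightarrow> n - 2*int i - 2*int j - 2*int k - 2*int l = 0)"
    unfolding hom_def by (intro iff_allI) (auto simp: algebra_simps)
  then show "hom n f = poly_hom (poly_hom (poly_hom (poly_hom const_hom))) n f"
    unfolding poly_hom_def const_hom_def mcoeff_def by (simp add: diff_diff_eq)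
qed

interpretation hom: homogeneity hom
  unfolding hom_eq_poly_hom
  by (intro homogeneity.homogeneity_poly_hom homogeneity_const_hom)

lemma hom_vars: "hom 2 vy2" "hom 2 vy1" "hom 2 vx2" "hom 2 vx1"
  unfolding hom_def mcoeff_def vy2_def vy1_def vx2_def vx1_def
  by (auto simp: coeff_pCons split: nat.splits)

lemma hom_ratc: "hom 0 (ratc q)"
  unfolding hom_def mcoeff_def ratc_def by (auto simp: coeff_pCons split: nat.splits)

lemma hom_ratc_mult: "hom n f \<Longrightarrow> hom n (ratc q * f)"
  by (rule hom.mult_eq[OF hom_ratc]) simp_all

lemma ratc_half: "2 * ratc (1/2) = 1"
  unfolding ratc_def mult_2 by (simp add: one_pCons)

lemma tt_nonzero: "tt1 \<noteq> 0" "tt2 \<noteq> 0"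
  unfolding tt1_def tt2_def vy1_def vx1_def vy2_def vx2_def by simp_all

lemma power_diff_div_mult_self:
  fixes x y :: "'a::{comm_ring_1, algebraic_semidom}"
  shows "(x ^ n - y ^ n) div (x - y) * (x - y) = x ^ n - y ^ n"
proof (rule dvd_div_mult_self)
  show "x - y dvd x ^ n - y ^ n"
    by (rule dvdI[of _ _ "\<Sum>i<n. y ^ (n - Suc i) * x ^ i"]) (rule power_diff_sumr2)
qed

lemma ww_mult_tt:
  "ww1 N * tt1 = vy1 ^ (N + 1) - vx1 ^ (N + 1)"
  "ww2 N * tt2 = vy2 ^ (N + 1) - vx2 ^ (N + 1)"
  unfolding ww1_def ww2_def tt1_def tt2_def by (rule power_diff_div_mult_self)+

lemma hom_ww2: "hom (2 * int N) (ww2 N)"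
proof (rule hom.cancel_eq)
  show "hom 2 tt2" unfolding tt2_def by (intro hom.diff hom_vars)
  have "hom (2 * int N + 2) (vy2 ^ (N + 1))" "hom (2 * int N + 2) (vx2 ^ (N + 1))"
    using hom.power[OF hom_vars(1), of "N + 1"] hom.power[OF hom_vars(3), of "N + 1"]
    by (simp_all add: algebra_simps)
  then show "hom (2 * int N + 2) (tt2 * ww2 N)"
    unfolding mult.commute[of tt2] ww_mult_tt by (rule hom.diff)
qed (simp_all add: tt_nonzero)

text \<open>\<open>t\<^sub>1\<close> has degree \<open>0\<close> in \<open>y\<^sub>2\<close>, so a common divisor is a constant in \<open>y\<^sub>2\<close>, which must divide
  the leading coefficient \<open>1\<close> of \<open>t\<^sub>2\<close>.\<close>
lemma coprime_tt: "coprime tt1 tt2"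
proof (rule coprimeI)
  fix d assume d1: "d dvd tt1" and d2: "d dvd tt2"
  have "degree d \<le> degree tt1" using dvd_imp_degree_le[OF d1 tt_nonzero(1)] .
  then have "d = [:coeff d 0:]"
    unfolding tt1_def vy1_def vx1_def by (simp add: degree_0_id)
  moreover have "coeff tt2 1 = 1"
    unfolding tt2_def vy2_def vx2_def by (simp add: one_pCons)
  ultimately show "is_unit d"
    using d2 const_poly_dvd_iff is_unit_const_poly_iff by metis
qed

lemma koszul_relation_rearrange:
  fixes x1 x2 y1 y2 u1 u2 w1 w2 :: "'a::idom"
  assumes "w1 * (y1 - x1) + w2 * (y2 - x2) = u1 * (y1 + y2 - x1 - x2) + u2 * (y1 * y2 - x1 * x2)"
  shows "(y2 - x2) * (u1 + y1 * u2 - w2) = (y1 - x1) * (w1 - u1 - u2 * x2)"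
  using assms by algebra

lemma a2_relations:
  fixes x1 x2 y1 y2 u1 u2 w1 w2 c Q :: "'a::idom"
  assumes "2 * c = 1" and "y1 \<noteq> x1"
    and "w1 * (y1 - x1) + w2 * (y2 - x2) = u1 * (y1 + y2 - x1 - x2) + u2 * (y1 * y2 - x1 * x2)"
    and "Q * (x1 - y1) = u1 + y1 * u2 - w2"
  shows "(c * u2 + Q) * (y1 - x1) = w2 - u1 - u2 * c * (x1 + y1)"
    and "(c * u2 + Q) * (y2 - x2) = u1 + u2 * c * (x2 + y2) - w1"
proof -
  show first: "(c * u2 + Q) * (y1 - x1) = w2 - u1 - u2 * c * (x1 + y1)"
    using assms(1,4) by algebra
  have "(y1 - x1) * ((c * u2 + Q) * (y2 - x2) - (u1 + u2 * c * (x2 + y2) - w1)) = 0"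
    using assms(1,3) first by algebra
  with \<open>y1 \<noteq> x1\<close> show "(c * u2 + Q) * (y2 - x2) = u1 + u2 * c * (x2 + y2) - w1"
    by simp
qed

context
  fixes N :: nat and u1 u2 :: R
  assumes rel: "vy1 ^ (N + 1) + vy2 ^ (N + 1) - vx1 ^ (N + 1) - vx2 ^ (N + 1) = u1 * ss1 + u2 * ss2"
begin

lemma ww_koszul_relation:
  "ww1 N * (vy1 - vx1) + ww2 N * (vy2 - vx2)
     = u1 * (vy1 + vy2 - vx1 - vx2) + u2 * (vy1 * vy2 - vx1 * vx2)"
proof -
  have "ww1 N * (vy1 - vx1) + ww2 N * (vy2 - vx2)
      = (vy1 ^ (N + 1) - vx1 ^ (N + 1)) + (vy2 ^ (N + 1) - vx2 ^ (N + 1))"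
    using ww_mult_tt[of N] unfolding tt1_def tt2_def by simp
  also have "\<dots> = u1 * ss1 + u2 * ss2"
    by (subst rel[symmetric]) (simp add: algebra_simps)
  finally show ?thesis unfolding ss1_def ss2_def .
qed

lemma dvd_aa2_numerator: "(vx1 - vy1) dvd (u1 + vy1 * u2 - ww2 N)"
proof -
  have "tt2 * (u1 + vy1 * u2 - ww2 N) = tt1 * (ww1 N - u1 - u2 * vx2)"
    using koszul_relation_rearrange[OF ww_koszul_relation] unfolding tt1_def tt2_def .
  then have "tt1 dvd tt2 * (u1 + vy1 * u2 - ww2 N)"
    by (metis dvd_triv_left)
  then have "tt1 dvd (u1 + vy1 * u2 - ww2 N)"
    by (rule coprime_dvd_mult_right_iff[OF coprime_tt, THEN iffD1])
  moreover have "vx1 - vy1 = - tt1" unfolding tt1_def by simp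
  ultimately show ?thesis by (simp only: minus_dvd_iff)
qed

lemma aa2_mult_tt:
  "aa2 N u1 u2 * (vy1 - vx1) = ww2 N - u1 - u2 * ratc (1/2) * (vx1 + vy1)"
  "aa2 N u1 u2 * (vy2 - vx2) = u1 + u2 * ratc (1/2) * (vx2 + vy2) - ww1 N"
proof -
  have "vy1 \<noteq> vx1" using tt_nonzero(1) unfolding tt1_def by simp
  note relations = a2_relations[OF ratc_half this ww_koszul_relation
      dvd_div_mult_self[OF dvd_aa2_numerator]]
  show "aa2 N u1 u2 * (vy1 - vx1) = ww2 N - u1 - u2 * ratc (1/2) * (vx1 + vy1)"
    unfolding aa2_def by (rule relations(1))
  show "aa2 N u1 u2 * (vy2 - vx2) = u1 + u2 * ratc (1/2) * (vx2 + vy2) - ww1 N"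
    unfolding aa2_def by (rule relations(2))
qed

lemma hom_aa2:
  assumes "hom (2 * int N) u1" and "hom (2 * int N - 2) u2"
  shows "hom (2 * int N - 2) (aa2 N u1 u2)"
proof -
  define F where "F = u1 + vy1 * u2 - ww2 N"
  have "hom (2 * int N) F"
    unfolding F_def
    by (intro hom.diff hom.add assms(1) hom_ww2 hom.mult_eq[OF hom_vars(2) assms(2)]) simp
  moreover have "(vx1 - vy1) * (F div (vx1 - vy1)) = F"
    unfolding F_def by (rule dvd_mult_div_cancel[OF dvd_aa2_numerator])
  ultimately have "hom (2 * int N) ((vx1 - vy1) * (F div (vx1 - vy1)))"
    by (simp only:)
  moreover have "hom 2 (vx1 - vy1)" by (intro hom.diff hom_vars)
  moreover have "vx1 - vy1 \<noteq> 0" using tt_nonzero(1) unfolding tt1_def by simp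
  ultimately have "hom (2 * int N - 2) (F div (vx1 - vy1))"
    using hom.cancel by blast
  then show ?thesis
    unfolding aa2_def F_def[symmetric] using assms(2) by (intro hom.add hom_ratc_mult)
qed

end

context
  fixes x1 x2 y1 y2 u1 u2 w1 w2 c A e0 e1 e2 e3 :: "'a::idom"
  assumes half: "2 * c = 1"
    and a2_t1: "A * (y1 - x1) = w2 - u1 - u2 * c * (x1 + y1)"
    and a2_t2: "A * (y2 - x2) = u1 + u2 * c * (x2 + y2) - w1"
begin

lemma koszul_identities:
  shows "(y1 + y2 - x1 - x2) * (e1 * (c * (x1 + y1)) - e2 * (c * (x2 + y2))) + (y1 * y2 - x1 * x2) * (e2 - e1)
      = ((y1 - x1) * e1 + (y2 - x2) * e2) * (c * (x1 + y1 - x2 - y2))"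
    and "u1 * (e0 * (c * (x1 + y1 - x2 - y2))) - (y1 * y2 - x1 * x2) * (e0 * A + e3)
      = (w1 * e0 - (y2 - x2) * e3) * (c * (x1 + y1)) - (w2 * e0 + (y1 - x1) * e3) * (c * (x2 + y2))"
    and "u2 * (e0 * (c * (x1 + y1 - x2 - y2))) + (y1 + y2 - x1 - x2) * (e0 * A + e3)
      = w2 * e0 + (y1 - x1) * e3 - (w1 * e0 - (y2 - x2) * e3)"
    and "u1 * (e2 - e1) - u2 * (e1 * (c * (x1 + y1)) - e2 * (c * (x2 + y2)))
      = ((y1 - x1) * e1 + (y2 - x2) * e2) * A + (w1 * e2 - w2 * e1)"
proof -
  have s2: "y1 * y2 - x1 * x2 = c * (x1 + y1) * (y2 - x2) + c * (x2 + y2) * (y1 - x1)"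
    using half by algebra
  show "(y1 + y2 - x1 - x2) * (e1 * (c * (x1 + y1)) - e2 * (c * (x2 + y2)))
      + (y1 * y2 - x1 * x2) * (e2 - e1) = ((y1 - x1) * e1 + (y2 - x2) * e2) * (c * (x1 + y1 - x2 - y2))"
    using half by algebra
  have "(y1 * y2 - x1 * x2) * (e0 * A + e3)
      = e0 * (c * (x1 + y1) * (A * (y2 - x2)) + c * (x2 + y2) * (A * (y1 - x1)))
        + e3 * (c * (x1 + y1) * (y2 - x2) + c * (x2 + y2) * (y1 - x1))"
    unfolding s2 by (simp add: algebra_simps)
  then show "u1 * (e0 * (c * (x1 + y1 - x2 - y2))) - (y1 * y2 - x1 * x2) * (e0 * A + e3)
      = (w1 * e0 - (y2 - x2) * e3) * (c * (x1 + y1)) - (w2 * e0 + (y1 - x1) * e3) * (c * (x2 + y2))"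
    unfolding a2_t1 a2_t2 by (simp add: algebra_simps)
  show "u2 * (e0 * (c * (x1 + y1 - x2 - y2))) + (y1 + y2 - x1 - x2) * (e0 * A + e3)
      = w2 * e0 + (y1 - x1) * e3 - (w1 * e0 - (y2 - x2) * e3)"
    using half a2_t1 a2_t2 by algebra
  show "u1 * (e2 - e1) - u2 * (e1 * (c * (x1 + y1)) - e2 * (c * (x2 + y2)))
      = ((y1 - x1) * e1 + (y2 - x2) * e2) * A + (w1 * e2 - w2 * e1)"
    using half a2_t1 a2_t2 by algebra
qed

end

lemma kd_tuple:
  "kd (a1, a2) (b1, b2) (e0, e1, e2, e3)
     = (b1 * e1 + b2 * e2, a1 * e0 - b2 * e3, a2 * e0 + b1 * e3, a1 * e2 - a2 * e1)"
  by (simp add: kd_def ext_add_def ext_smult_def contr1_def contr2_def wedge1_def wedge2_def)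

lemma chi0_tuple:
  "chi0 N u1 u2 (e0, e1, e2, e3)
     = (e0 * (ratc (1/2) * (vx1 + vy1 - vx2 - vy2)),
        e1 * (ratc (1/2) * (vx1 + vy1)) - e2 * (ratc (1/2) * (vx2 + vy2)),
        e2 - e1,
        e0 * aa2 N u1 u2 + e3)"
  by (simp add: chi0_def ext_add_def ext_smult_def one_e_def th1_def th2_def th12_def)

lemma chi0_even: "ext_even e \<Longrightarrow> ext_even (chi0 N u1 u2 e)"
  by (cases e rule: prod_cases4) (simp add: chi0_tuple ext_even_def)

lemma chi0_odd: "ext_odd e \<Longrightarrow> ext_odd (chi0 N u1 u2 e)"
  by (cases e rule: prod_cases4) (simp add: chi0_tuple ext_odd_def)

lemma ext0_chi0: "ext0 (chi0 N u1 u2 e) = ratc (1/2) * (vx1 + vy1 - vx2 - vy2) * ext0 e"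
  by (cases e rule: prod_cases4) (simp add: chi0_tuple ext0_def)

lemma chi0_hom:
  assumes a2: "hom (2 * int N - 2) (aa2 N u1 u2)"
    and e: "ext_hom (int (N + 1) - 2 * int N) (int (N + 1) - 2 * int N) n e"
  shows "ext_hom (int (N + 1) - 2 * int N) (int (N + 1) - (2 * int N - 2)) (n + 2) (chi0 N u1 u2 e)"
proof (cases e rule: prod_cases4)
  case (fields e0 e1 e2 e3)
  have m: "hom 2 (ratc (1/2) * (vx1 + vy1 - vx2 - vy2))"
    by (intro hom_ratc_mult hom.add hom.diff hom_vars)
  have m1: "hom 2 (ratc (1/2) * (vx1 + vy1))"
    by (intro hom_ratc_mult hom.add hom_vars)
  have m2: "hom 2 (ratc (1/2) * (vx2 + vy2))"
    by (intro hom_ratc_mult hom.add hom_vars)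
  from e have e0: "hom n e0" and e1: "hom (n + int N - 1) e1" and e2: "hom (n + int N - 1) e2"
    and e3: "hom (n + 2 * int N - 2) e3"
    unfolding fields ext_hom_def by (simp_all add: algebra_simps)
  have "hom (n + 2) (e0 * (ratc (1/2) * (vx1 + vy1 - vx2 - vy2)))"
    by (rule hom.mult_eq[OF e0 m]) simp
  moreover have "hom (1 + (n + int N))
      (e1 * (ratc (1/2) * (vx1 + vy1)) - e2 * (ratc (1/2) * (vx2 + vy2)))"
    by (intro hom.diff hom.mult_eq[OF e1 m1] hom.mult_eq[OF e2 m2]) simp_all
  moreover have "hom (n + int N - 1) (e2 - e1)"
    by (rule hom.diff[OF e2 e1])
  moreover have "hom (n + 2 * int N - 2) (e0 * aa2 N u1 u2 + e3)"
    by (intro hom.add e3 hom.mult_eq[OF e0 a2]) simp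
  ultimately show ?thesis
    unfolding fields chi0_tuple ext_hom_def by simp
qed

lemma chi0_kd:
  assumes rel: "vy1 ^ (N + 1) + vy2 ^ (N + 1) - vx1 ^ (N + 1) - vx2 ^ (N + 1) = u1 * ss1 + u2 * ss2"
  shows "kd (u1, u2) (ss1, ss2) (chi0 N u1 u2 e) = chi0 N u1 u2 (kd (ww1 N, ww2 N) (tt1, tt2) e)"
proof (cases e rule: prod_cases4)
  case (fields e0 e1 e2 e3)
  show ?thesis
    unfolding fields chi0_tuple kd_tuple ss1_def ss2_def tt1_def tt2_def prod.inject
    by (intro conjI koszul_identities[OF ratc_half aa2_mult_tt[OF rel]])
qed

lemma mult_tt_ideal_subset_ss_ideal:
  "in_ideal2 r tt1 tt2 \<Longrightarrow> in_ideal2 (ratc (1/2) * (vx1 + vy1 - vx2 - vy2) * r) ss1 ss2"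
proof -
  assume "in_ideal2 r tt1 tt2"
  then obtain p q where r: "r = p * tt1 + q * tt2" unfolding in_ideal2_def by blast
  let ?c = "ratc (1/2)"
  have "?c * (vx1 + vy1 - vx2 - vy2) * r
      = (p * (?c * (vx1 + vy1)) - q * (?c * (vx2 + vy2))) * ss1 + (q - p) * ss2"
    unfolding r tt1_def tt2_def ss1_def ss2_def using ratc_half by algebra
  then show ?thesis unfolding in_ideal2_def by blast
qed

theorem lemmaA6:
  fixes N :: nat and u1 u2 :: R
  assumes "N > 0"
    and "hom (2 * int N) u1" and "hom (2 * int N - 2) u2"
    and "vy1 ^ (N + 1) + vy2 ^ (N + 1) - vx1 ^ (N + 1) - vx2 ^ (N + 1) = u1 * ss1 + u2 * ss2"
    and "swapxy u1 = u1" and "swapxy u2 = u2"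
  shows
    "(\<forall>e. ext_even e \<longrightarrow> ext_even (chi0 N u1 u2 e))
     \<and> (\<forall>e. ext_odd e \<longrightarrow> ext_odd (chi0 N u1 u2 e))
     \<and> (\<forall>n e. ext_hom (int (N + 1) - 2 * int N) (int (N + 1) - 2 * int N) n e
              \<longrightarrow> ext_hom (int (N + 1) - 2 * int N) (int (N + 1) - (2 * int N - 2)) (n + 2)
                    (chi0 N u1 u2 e))
     \<and> (\<forall>e. kd (u1, u2) (ss1, ss2) (chi0 N u1 u2 e) = chi0 N u1 u2 (kd (ww1 N, ww2 N) (tt1, tt2) e))
     \<and> (\<forall>r. in_ideal2 r tt1 tt2 \<longrightarrow> in_ideal2 (ratc (1/2) * (vx1 + vy1 - vx2 - vy2) * r) ss1 ss2)
     \<and> (\<forall>e. in_ideal2 (ext0 (chi0 N u1 u2 e) - ratc (1/2) * (vx1 + vy1 - vx2 - vy2) * ext0 e) ss1 ss2)"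
proof -
  have a2: "hom (2 * int N - 2) (aa2 N u1 u2)"
    by (rule hom_aa2[OF assms(4,2,3)])
  have "in_ideal2 0 ss1 ss2"
    unfolding in_ideal2_def by (intro exI[of _ 0]) simp
  then show ?thesis
    using chi0_even chi0_odd chi0_hom[OF a2] chi0_kd[OF assms(4)]
      mult_tt_ideal_subset_ss_ideal ext0_chi0
    by simp
qed

end
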